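(* Let $M$ be a magma satisfying $(xy)z = xz$ and $x(yz) = xy$ for all $x,y,z\in M$. Then $M$ satisfies $xy = xz$ and $(xy)z = xy$ for all $x,y,z\in M$ if and only if $M$ avoids both magmas $M_1$ (on $\{0,1,2\}$) and $M_2$ (on $\{0,1,2,3\}$) with Cayley tables \[ \begin{array}{c|ccc} M_1 & 0 & 1 & 2 \\ \hline 0 & 0 & 2 & 0 \\ 1 & 1 & 1 & 1 \\ 2 & 0 & 2 & 0 \end{array} \qquad \begin{array}{c|cccc} M_2 & 0 & 1 & 2 & 3 \\ \hline 0 & 0 & 2 & 0 & 2 \\ 1 & 1 & 3 & 1 & 3 \\ 2 & 0 & 2 & 0 & 2 \\ 3 & 1 & 3 & 1 & 3 \end{array}. \]
   Context: A magma is a nonempty set with a binary operation, written by juxtaposition. A magma $M$ avoids a magma $F$ if no submagma of $M$ is isomorphic to $F$. In the Cayley tables, the entry in row $i$, column $j$ is $i\cdot j$. *)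

theory Defs
  imports Main
begin

definition magma :: "'a set \<Rightarrow> ('a \<Rightarrow> 'a \<Rightarrow> 'a) \<Rightarrow> bool" where
  "magma S f \<longleftrightarrow> S \<noteq> {} \<and> (\<forall>x\<in>S. \<forall>y\<in>S. f x y \<in> S)"

definition submagma :: "'a set \<Rightarrow> 'a set \<Rightarrow> ('a \<Rightarrow> 'a \<Rightarrow> 'a) \<Rightarrow> bool" where
  "submagma T S f \<longleftrightarrow> T \<noteq> {} \<and> T \<subseteq> S \<and> (\<forall>x\<in>T. \<forall>y\<in>T. f x y \<in> T)"

definition magma_iso :: "('b \<Rightarrow> 'a) \<Rightarrow> 'b set \<Rightarrow> ('b \<Rightarrow> 'b \<Rightarrow> 'b) \<Rightarrow> 'a set \<Rightarrow> ('a \<Rightarrow> 'a \<Rightarrow> 'a) \<Rightarrow> bool" where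
  "magma_iso h A g B f \<longleftrightarrow> bij_betw h A B \<and> (\<forall>x\<in>A. \<forall>y\<in>A. h (g x y) = f (h x) (h y))"

definition magma_isomorphic :: "'b set \<Rightarrow> ('b \<Rightarrow> 'b \<Rightarrow> 'b) \<Rightarrow> 'a set \<Rightarrow> ('a \<Rightarrow> 'a \<Rightarrow> 'a) \<Rightarrow> bool" where
  "magma_isomorphic A g B f \<longleftrightarrow> (\<exists>h. magma_iso h A g B f)"

definition avoids :: "'a set \<Rightarrow> ('a \<Rightarrow> 'a \<Rightarrow> 'a) \<Rightarrow> 'b set \<Rightarrow> ('b \<Rightarrow> 'b \<Rightarrow> 'b) \<Rightarrow> bool" where
  "avoids S f A g \<longleftrightarrow> \<not> (\<exists>T. submagma T S f \<and> magma_isomorphic A g T f)"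

definition M1_op :: "nat \<Rightarrow> nat \<Rightarrow> nat" where
  "M1_op i j = [[0,2,0],[1,1,1],[0,2,0]] ! i ! j"

definition M2_op :: "nat \<Rightarrow> nat \<Rightarrow> nat" where
  "M2_op i j = [[0,2,0,2],[1,3,1,3],[0,2,0,2],[1,3,1,3]] ! i ! j"

end

theory Submission
  imports Defs
begin

text \<open>The two laws give \<open>(xy)(zw) = xz\<close>; in particular every square \<open>xx\<close> is idempotent and
  has the same row as \<open>x\<close>. A non-constant row therefore yields idempotents \<open>a, c\<close> with
  \<open>ac \<noteq> a\<close>, and the products of \<open>a\<close> and \<open>c\<close> form a copy of \<open>M\<^sub>2\<close>, or of its quotient
  \<open>M\<^sub>1\<close> when \<open>ca = c\<close>. Conversely, constant rows pass to submagmas and their isomorphic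
  copies, while row 0 of \<open>M\<^sub>1\<close> and of \<open>M\<^sub>2\<close> is not constant. Given constant rows,
  \<open>(xy)z = xz = xy\<close> follows.\<close>

definition constant_rows :: "'a set \<Rightarrow> ('a \<Rightarrow> 'a \<Rightarrow> 'a) \<Rightarrow> bool" where
  "constant_rows S f \<longleftrightarrow> (\<forall>x\<in>S. \<forall>y\<in>S. \<forall>z\<in>S. f x y = f x z)"

lemma not_avoids_if_embedding:
  assumes "magma A g" and "inj_on h A" and "h ` A \<subseteq> S"
    and hom: "\<forall>x\<in>A. \<forall>y\<in>A. h (g x y) = f (h x) (h y)"
  shows "\<not> avoids S f A g"
proof -
  have "f u v \<in> h ` A" if "u \<in> h ` A" "v \<in> h ` A" for u v
    using that hom \<open>magma A g\<close> unfolding magma_def by (auto simp flip: hom[rule_format])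
  then have "submagma (h ` A) S f"
    using assms unfolding magma_def submagma_def by blast
  moreover have "magma_isomorphic A g (h ` A) f"
    using assms unfolding magma_isomorphic_def magma_iso_def bij_betw_def by blast
  ultimately show ?thesis
    unfolding avoids_def by blast
qed

lemma constant_rows_if_isomorphic_submagma:
  assumes "constant_rows S f" and "magma A g" and "submagma T S f" and "magma_iso h A g T f"
  shows "constant_rows A g"
  unfolding constant_rows_def
proof (intro ballI)
  fix x y z assume "x \<in> A" "y \<in> A" "z \<in> A"
  have "bij_betw h A T" and hom: "\<forall>x\<in>A. \<forall>y\<in>A. h (g x y) = f (h x) (h y)"
    using assms(4) unfolding magma_iso_def by auto
  then have "h x \<in> S" "h y \<in> S" "h z \<in> S"
    using \<open>x \<in> A\<close> \<open>y \<in> A\<close> \<open>z \<in> A\<close> assms(3) unfolding bij_betw_def submagma_def by auto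
  then have "f (h x) (h y) = f (h x) (h z)"
    using assms(1) unfolding constant_rows_def by blast
  then have "h (g x y) = h (g x z)"
    using hom \<open>x \<in> A\<close> \<open>y \<in> A\<close> \<open>z \<in> A\<close> by simp
  moreover have "g x y \<in> A" "g x z \<in> A"
    using assms(2) \<open>x \<in> A\<close> \<open>y \<in> A\<close> \<open>z \<in> A\<close> unfolding magma_def by auto
  ultimately show "g x y = g x z"
    using \<open>bij_betw h A T\<close> by (metis bij_betw_imp_inj_on inj_onD)
qed

lemma avoids_if_constant_rows:
  assumes "constant_rows S f" and "magma A g" and "\<not> constant_rows A g"
  shows "avoids S f A g"
  using assms constant_rows_if_isomorphic_submagma
  unfolding avoids_def magma_isomorphic_def by blast

lemma magma_M1: "magma {0,1,2} M1_op"
  by (auto simp: magma_def M1_op_def)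

lemma magma_M2: "magma {0,1,2,3} M2_op"
  by (auto simp: magma_def M2_op_def)

lemma not_constant_rows_M1: "\<not> constant_rows {0,1,2} M1_op"
  unfolding constant_rows_def by (auto simp: M1_op_def)

lemma not_constant_rows_M2: "\<not> constant_rows {0,1,2,3} M2_op"
  unfolding constant_rows_def by (auto simp: M2_op_def)

locale absorption_magma =
  fixes S :: "'a set" and f :: "'a \<Rightarrow> 'a \<Rightarrow> 'a"
  assumes closed: "\<lbrakk>x \<in> S; y \<in> S\<rbrakk> \<Longrightarrow> f x y \<in> S"
    and left_absorb: "\<lbrakk>x \<in> S; y \<in> S; z \<in> S\<rbrakk> \<Longrightarrow> f (f x y) z = f x z"
    and right_absorb: "\<lbrakk>x \<in> S; y \<in> S; z \<in> S\<rbrakk> \<Longrightarrow> f x (f y z) = f x y"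
begin

lemma mult_mult:
  "\<lbrakk>x \<in> S; y \<in> S; z \<in> S; w \<in> S\<rbrakk> \<Longrightarrow> f (f x y) (f z w) = f x z"
  by (simp add: closed left_absorb right_absorb)

lemma square_idem: "x \<in> S \<Longrightarrow> f (f x x) (f x x) = f x x"
  by (simp add: mult_mult)

lemma exists_idempotents_if_not_constant_rows:
  assumes "\<not> constant_rows S f"
  obtains a c where "a \<in> S" "c \<in> S" "f a a = a" "f c c = c" "f a c \<noteq> a"
proof -
  obtain x y z where "x \<in> S" "y \<in> S" "z \<in> S" "f x y \<noteq> f x z"
    using assms unfolding constant_rows_def by blast
  define a where "a = f x x"
  have "a \<in> S" and "f a a = a"
    unfolding a_def using \<open>x \<in> S\<close> by (simp_all add: closed square_idem)
  have "f a y \<noteq> f a z"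
    unfolding a_def using \<open>x \<in> S\<close> \<open>y \<in> S\<close> \<open>z \<in> S\<close> \<open>f x y \<noteq> f x z\<close> by (simp add: left_absorb)
  then obtain b where "b \<in> S" "f a b \<noteq> a"
    using \<open>y \<in> S\<close> \<open>z \<in> S\<close> by (cases "f a y = a") auto
  moreover have "f b b \<in> S" "f (f b b) (f b b) = f b b"
    using \<open>b \<in> S\<close> by (simp_all add: closed square_idem)
  moreover have "f a (f b b) \<noteq> a"
    using \<open>a \<in> S\<close> \<open>b \<in> S\<close> \<open>f a b \<noteq> a\<close> by (simp add: right_absorb)
  ultimately show ?thesis
    using that \<open>a \<in> S\<close> \<open>f a a = a\<close> by blast
qed

context
  fixes a c
  assumes a: "a \<in> S" "f a a = a" and c: "c \<in> S" "f c c = c" and ac: "f a c \<noteq> a"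
begin

lemma idempotents_distinct: "a \<noteq> c" "c \<noteq> f a c" "a \<noteq> f c a" "f a c \<noteq> f c a"
proof -
  show "a \<noteq> c"
    using a ac by auto
  have "f (f a c) (f a c) = a"
    using a c by (simp add: mult_mult)
  then show "c \<noteq> f a c"
    using c \<open>a \<noteq> c\<close> by auto
  have "f a (f c a) = f a c"
    using a c by (simp add: right_absorb)
  then show "a \<noteq> f c a"
    using a ac by auto
  have "f (f a c) a = a" "f (f c a) a = f c a"
    using a c by (simp_all add: left_absorb)
  then show "f a c \<noteq> f c a"
    using \<open>a \<noteq> f c a\<close> by auto
qed

text \<open>Both embeddings send an index to a product \<open>u\<^sub>p u\<^sub>q\<close> with \<open>u\<^sub>0 = a\<close> and \<open>u\<^sub>1 = c\<close>;
  by mult_mult these multiply as \<open>(u\<^sub>p u\<^sub>q)(u\<^sub>r u\<^sub>s) = u\<^sub>p u\<^sub>r\<close>. For \<open>M\<^sub>2\<close> the index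
  is \<open>p + 2q\<close>; \<open>M\<^sub>1\<close> is \<open>M\<^sub>2\<close> with the indices 1 and 3 identified, which is what \<open>ca = c\<close>
  does to \<open>u\<^sub>1 u\<^sub>0\<close> and \<open>u\<^sub>1 u\<^sub>1\<close>.\<close>

lemma not_avoids_M1_if_right_absorbing:
  assumes "f c a = c"
  shows "\<not> avoids S f {0,1,2} M1_op"
proof (rule not_avoids_if_embedding[OF magma_M1])
  let ?h = "\<lambda>i::nat. f (if i = 1 then c else a) (if i = 2 then c else a)"
  show "inj_on ?h {0,1,2}"
    using idempotents_distinct ac a c assms by auto
  show "?h ` {0,1,2} \<subseteq> S"
    using a c closed by auto
  show "\<forall>x\<in>{0,1,2}. \<forall>y\<in>{0,1,2}. ?h (M1_op x y) = f (?h x) (?h y)"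
    using a c assms by (auto simp: M1_op_def mult_mult)
qed

lemma not_avoids_M2_if_not_right_absorbing:
  assumes "f c a \<noteq> c"
  shows "\<not> avoids S f {0,1,2,3} M2_op"
proof (rule not_avoids_if_embedding[OF magma_M2])
  let ?h = "\<lambda>i::nat. f (if even i then a else c) (if i < 2 then a else c)"
  show "inj_on ?h {0,1,2,3}"
    using idempotents_distinct ac assms a c by auto
  show "?h ` {0,1,2,3} \<subseteq> S"
    using a c closed by auto
  show "\<forall>x\<in>{0,1,2,3}. \<forall>y\<in>{0,1,2,3}. ?h (M2_op x y) = f (?h x) (?h y)"
    using a c by (auto simp: M2_op_def mult_mult)
qed

end

lemma constant_rows_if_avoids:
  assumes "avoids S f {0,1,2} M1_op" and "avoids S f {0,1,2,3} M2_op"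
  shows "constant_rows S f"
proof (rule ccontr)
  assume "\<not> constant_rows S f"
  then obtain a c where "a \<in> S" "c \<in> S" "f a a = a" "f c c = c" "f a c \<noteq> a"
    by (rule exists_idempotents_if_not_constant_rows)
  then show False
    using assms not_avoids_M1_if_right_absorbing not_avoids_M2_if_not_right_absorbing by blast
qed

lemma left_zero_product_if_constant_rows:
  assumes "constant_rows S f" and "x \<in> S" "y \<in> S" "z \<in> S"
  shows "f (f x y) z = f x y"
  using assms left_absorb unfolding constant_rows_def by metis

end

theorem mainTheorem16:
  fixes S :: "'a set" and f :: "'a \<Rightarrow> 'a \<Rightarrow> 'a"
  assumes "magma S f"
    and "\<forall>x\<in>S. \<forall>y\<in>S. \<forall>z\<in>S. f (f x y) z = f x z"
    and "\<forall>x\<in>S. \<forall>y\<in>S. \<forall>z\<in>S. f x (f y z) = f x y"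
  shows "((\<forall>x\<in>S. \<forall>y\<in>S. \<forall>z\<in>S. f x y = f x z) \<and> (\<forall>x\<in>S. \<forall>y\<in>S. \<forall>z\<in>S. f (f x y) z = f x y))
     \<longleftrightarrow> (avoids S f {0,1,2} M1_op \<and> avoids S f {0,1,2,3} M2_op)"
proof -
  interpret absorption_magma S f
    using assms unfolding magma_def by unfold_locales auto
  have "constant_rows S f \<longleftrightarrow> avoids S f {0,1,2} M1_op \<and> avoids S f {0,1,2,3} M2_op"
    using avoids_if_constant_rows magma_M1 magma_M2 not_constant_rows_M1 not_constant_rows_M2
      constant_rows_if_avoids by blast
  then show ?thesis
    using left_zero_product_if_constant_rows unfolding constant_rows_def by blast
qed

end
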